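(* For every integer $n \geq 4$, $$\gamma_{b,2}(C_4 \square C_n) = 4\left\lfloor \frac{n}{6} \right\rfloor + \begin{cases} 0 & \text{if } n \equiv 0 \pmod 6,\\ 2 & \text{if } n \equiv 1 \text{ or } 2 \pmod 6,\\ 3 & \text{if } n \equiv 3 \text{ or } 4 \pmod 6,\\ 4 & \text{if } n \equiv 5 \pmod 6.\end{cases}$$
   Context: For a graph $G$, a $2$-limited broadcast is a function $f: V(G) \to \{0,1,2\}$. A vertex $u$ hears the broadcast from $v$ if $f(v) > 0$ and $d(u,v) \leq f(v)$, where $d$ is the distance in $G$. The broadcast $f$ is dominating if every vertex of $G$ hears the broadcast from some vertex. The cost of $f$ is $\sum_{v \in V(G)} f(v)$. The $2$-limited broadcast domination number $\gamma_{b,2}(G)$ is the minimum cost of a $2$-limited dominating broadcast on $G$. $C_n$ denotes the cycle on $n$ vertices and $\square$ the Cartesian product of graphs. *)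

theory Defs
  imports Main
begin

inductive walk :: "'a set \<Rightarrow> ('a \<Rightarrow> 'a \<Rightarrow> bool) \<Rightarrow> nat \<Rightarrow> 'a \<Rightarrow> 'a \<Rightarrow> bool"
  for V E where
  walk0: "u \<in> V \<Longrightarrow> walk V E 0 u u"
| walkS: "u \<in> V \<Longrightarrow> E u w \<Longrightarrow> walk V E k w v \<Longrightarrow> walk V E (Suc k) u v"

(* graph distance: length of a shortest walk (only meaningful for connected pairs) *)
definition gdist :: "'a set \<Rightarrow> ('a \<Rightarrow> 'a \<Rightarrow> bool) \<Rightarrow> 'a \<Rightarrow> 'a \<Rightarrow> nat" where
  "gdist V E u v = (LEAST k. walk V E k u v)"

definition hears :: "'a set \<Rightarrow> ('a \<Rightarrow> 'a \<Rightarrow> bool) \<Rightarrow> ('a \<Rightarrow> nat) \<Rightarrow> 'a \<Rightarrow> 'a \<Rightarrow> bool" where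
  "hears V E f u v \<longleftrightarrow> f v > 0 \<and> (\<exists>k. walk V E k v u) \<and> gdist V E v u \<le> f v"

definition broadcast2 :: "'a set \<Rightarrow> ('a \<Rightarrow> nat) \<Rightarrow> bool" where
  "broadcast2 V f \<longleftrightarrow> (\<forall>v\<in>V. f v \<le> 2) \<and> (\<forall>v. v \<notin> V \<longrightarrow> f v = 0)"

definition dominating_bcast2 :: "'a set \<Rightarrow> ('a \<Rightarrow> 'a \<Rightarrow> bool) \<Rightarrow> ('a \<Rightarrow> nat) \<Rightarrow> bool" where
  "dominating_bcast2 V E f \<longleftrightarrow> broadcast2 V f \<and> (\<forall>u\<in>V. \<exists>v\<in>V. hears V E f u v)"

definition bcast_cost :: "'a set \<Rightarrow> ('a \<Rightarrow> nat) \<Rightarrow> nat" where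
  "bcast_cost V f = (\<Sum>v\<in>V. f v)"

definition gamma_b2 :: "'a set \<Rightarrow> ('a \<Rightarrow> 'a \<Rightarrow> bool) \<Rightarrow> nat" where
  "gamma_b2 V E = (LEAST c. \<exists>f. dominating_bcast2 V E f \<and> bcast_cost V f = c)"

definition cyc_adj :: "nat \<Rightarrow> nat \<Rightarrow> nat \<Rightarrow> bool" where
  "cyc_adj k x y \<longleftrightarrow> x < k \<and> y < k \<and> ((x + 1) mod k = y \<or> (y + 1) mod k = x)"

definition cart_adj :: "('a \<Rightarrow> 'a \<Rightarrow> bool) \<Rightarrow> ('b \<Rightarrow> 'b \<Rightarrow> bool) \<Rightarrow> 'a \<times> 'b \<Rightarrow> 'a \<times> 'b \<Rightarrow> bool" where
  "cart_adj E1 E2 p q \<longleftrightarrow>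
     (fst p = fst q \<and> E2 (snd p) (snd q)) \<or> (snd p = snd q \<and> E1 (fst p) (fst q))"

definition torus_V :: "nat \<Rightarrow> nat \<Rightarrow> (nat \<times> nat) set" where
  "torus_V m n = {0..<m} \<times> {0..<n}"

definition torus_E :: "nat \<Rightarrow> nat \<Rightarrow> nat \<times> nat \<Rightarrow> nat \<times> nat \<Rightarrow> bool" where
  "torus_E m n = cart_adj (cyc_adj m) (cyc_adj n)"

end

theory Submission
  imports Defs
begin

text \<open>Distances in \<open>C\<^sub>4 \<box> C\<^sub>n\<close> are sums of circular distances, so a vertex of power 1 is heard
  by 5 vertices and one of power 2 by at most 12.
  A dominating broadcast with \<open>a\<close> vertices of power 1 and \<open>b\<close> of power 2 therefore satisfies
  \<open>4n + e \<le> 5a + 12b\<close>, where \<open>e\<close> counts repeated hearings, and its cost is \<open>a + 2b\<close>.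
  This gives the lower bound except in two tight cases: \<open>n \<equiv> 3 (mod 6)\<close> with every vertex
  hearing exactly one power-2 vertex, and \<open>n \<equiv> 1 (mod 6)\<close> with one power-1 vertex and \<open>e \<le> 1\<close>.
  In both, the vertex at offset \<open>(2,1)\<close> from a power-2 vertex can only be heard from offset
  \<open>(2,3)\<close>; the resulting chain of power-2 vertices winds around the torus into a collision.
  The upper bound is an explicit broadcast: power-2 vertices at \<open>(0, 6q)\<close> and \<open>(2, 6q + 3)\<close>,
  with the last few columns patched according to \<open>n mod 6\<close>.
  Vertices of power 2 and 1 are called strong and weak below.\<close>

section \<open>Circular distance\<close>

definition circ_norm :: "int \<Rightarrow> int \<Rightarrow> int" where
  "circ_norm m x = min (x mod m) (m - x mod m)"

definition circ_rep :: "int \<Rightarrow> int \<Rightarrow> int" where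
  "circ_rep m x = (if x mod m \<le> m - x mod m then x mod m else x mod m - m)"

lemma circ_norm_cong: "x mod m = y mod m \<Longrightarrow> circ_norm m x = circ_norm m y"
  by (simp add: circ_norm_def)

lemma circ_norm_mod [simp]: "circ_norm m (x mod m) = circ_norm m x"
  by (simp add: circ_norm_def)

lemma circ_norm_0 [simp]: "m \<ge> 0 \<Longrightarrow> circ_norm m 0 = 0"
  by (simp add: circ_norm_def)

lemma circ_norm_nonneg: "m > 0 \<Longrightarrow> circ_norm m x \<ge> 0"
  unfolding circ_norm_def using pos_mod_bound[of m x] pos_mod_sign[of m x] by linarith

lemma circ_norm_uminus: "m > 0 \<Longrightarrow> circ_norm m (- x) = circ_norm m x"
  by (auto simp add: circ_norm_def zmod_zminus1_eq_if)

lemma circ_norm_minus_commute: "m > 0 \<Longrightarrow> circ_norm m (x - y) = circ_norm m (y - x)"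
  using circ_norm_uminus[of m "y - x"] by simp

lemma circ_norm_le_abs: assumes "m > 0" shows "circ_norm m x \<le> \<bar>x\<bar>"
proof -
  have "circ_norm m y \<le> y" if "y \<ge> 0" for y
    using that assms zmod_le_nonneg_dividend[of y m] by (simp add: circ_norm_def)
  from this[of x] this[of "- x"] show ?thesis
    using circ_norm_uminus[OF assms, of x] by (cases "x \<ge> 0") auto
qed

lemma circ_norm_eq_abs: assumes "2 * \<bar>d\<bar> \<le> m" shows "circ_norm m d = \<bar>d\<bar>"
proof (cases "d \<ge> 0")
  case True
  then show ?thesis using assms by (cases "d = 0") (simp_all add: circ_norm_def)
next
  case False
  then have "d mod m = d + m" using assms
    by (smt (verit) mod_add_self2 mod_pos_pos_trivial)
  then show ?thesis using False assms by (simp add: circ_norm_def)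
qed

lemma circ_rep_mod: "circ_rep m x mod m = x mod m"
  by (simp add: circ_rep_def mod_diff_right_eq[symmetric])

lemma
  assumes "m > 0"
  shows abs_circ_rep: "\<bar>circ_rep m x\<bar> = circ_norm m x"
    and circ_rep_lower: "- m < 2 * circ_rep m x"
proof -
  define r where "r = x mod m"
  have "0 \<le> r" "r < m" using assms by (simp_all add: r_def)
  then show "\<bar>circ_rep m x\<bar> = circ_norm m x" "- m < 2 * circ_rep m x"
    unfolding circ_rep_def circ_norm_def r_def[symmetric] by auto
qed

lemma circ_norm_triangle: assumes "m > 0" shows "circ_norm m (x + y) \<le> circ_norm m x + circ_norm m y"
proof -
  let ?x = "circ_rep m x" and ?y = "circ_rep m y"
  have "(?x + ?y) mod m = (x + y) mod m" using circ_rep_mod by (metis mod_add_cong)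
  then have "circ_norm m (x + y) = circ_norm m (?x + ?y)" by (metis circ_norm_cong)
  also have "\<dots> \<le> \<bar>?x + ?y\<bar>" using circ_norm_le_abs[OF assms] .
  also have "\<dots> \<le> circ_norm m x + circ_norm m y" using abs_circ_rep[OF assms] by (metis abs_triangle_ineq)
  finally show ?thesis .
qed

lemma circ_norm_eq_min: "0 \<le> d \<Longrightarrow> d \<le> m \<Longrightarrow> circ_norm m d = min d (m - d)"
  by (cases "d = m") (simp_all add: circ_norm_def)

lemma circ_norm_4_simps [simp]:
  "circ_norm 4 1 = 1" "circ_norm 4 (-1) = 1" "circ_norm 4 2 = 2" "circ_norm 4 (-2) = 2"
  "circ_norm 4 3 = 1" "circ_norm 4 (-3) = 1" "circ_norm 4 4 = 0"
  by (simp_all add: circ_norm_def)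

lemma circ_norm_4_le_2: "circ_norm 4 x \<le> 2"
  unfolding circ_norm_def by linarith

section \<open>Distance in the torus\<close>

definition torus_dist :: "nat \<Rightarrow> nat \<Rightarrow> nat \<times> nat \<Rightarrow> nat \<times> nat \<Rightarrow> int" where
  "torus_dist m n u v =
     circ_norm (int m) (int (fst v) - int (fst u)) + circ_norm (int n) (int (snd v) - int (snd u))"

definition torus_shift :: "nat \<Rightarrow> nat \<Rightarrow> nat \<times> nat \<Rightarrow> int \<times> int \<Rightarrow> nat \<times> nat" where
  "torus_shift m n P d =
     (nat ((int (fst P) + fst d) mod int m), nat ((int (snd P) + snd d) mod int n))"

lemma mem_torus_V: "u \<in> torus_V m n \<longleftrightarrow> fst u < m \<and> snd u < n"
  by (cases u) (auto simp: torus_V_def)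

lemma finite_torus_V [simp]: "finite (torus_V m n)"
  by (simp add: torus_V_def)

lemma card_torus_V: "card (torus_V m n) = m * n"
  by (simp add: torus_V_def)

lemma torus_dist_self [simp]: "torus_dist m n u u = 0"
  by (simp add: torus_dist_def)

lemma walk_in_V: "walk V E k u v \<Longrightarrow> u \<in> V \<and> v \<in> V"
  by (induction rule: walk.induct) auto

lemma walk_split: "walk V E (k + l) u v \<Longrightarrow> \<exists>w. walk V E k u w \<and> walk V E l w v"
proof (induction k arbitrary: u)
  case 0
  then show ?case using walk_in_V by (fastforce intro: walk0)
next
  case (Suc k)
  then obtain w where "u \<in> V" "E u w" "walk V E (k + l) w v"
    by (auto elim: walk.cases)
  with Suc.IH show ?case by (meson walkS)
qed

lemma cyc_adj_succ: assumes "x < k" shows "cyc_adj k x (nat ((int x + 1) mod int k))"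
proof -
  have "nat ((int x + 1) mod int k) = Suc x mod k"
    by (simp add: nat_mod_distrib nat_add_distrib)
  then show ?thesis using assms by (simp add: cyc_adj_def)
qed

lemma cyc_adj_pred: assumes "x < k" shows "cyc_adj k x (nat ((int x - 1) mod int k))"
proof -
  define y where "y = nat ((int x - 1) mod int k)"
  have y: "int y = (int x - 1) mod int k" using assms by (simp add: y_def)
  then have "int (Suc y mod k) = int x"
    using assms by (simp add: of_nat_mod mod_add_right_eq)
  then have "Suc y mod k = x" by linarith
  moreover have "y < k"
    using y assms pos_mod_bound[of "int k" "int x - 1"] by linarith
  ultimately show ?thesis using assms by (simp add: cyc_adj_def flip: y_def)
qed

lemma circ_norm_cyc_adj: assumes "cyc_adj k x y" shows "circ_norm (int k) (int y - int x) \<le> 1"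
proof -
  have k: "k > 0" using assms by (simp add: cyc_adj_def)
  from assms have "(x + 1) mod k = y \<or> (y + 1) mod k = x" by (simp add: cyc_adj_def)
  then consider "int y = (int x + 1) mod int k" | "int x = (int y + 1) mod int k"
    by (metis of_nat_1 of_nat_add of_nat_mod)
  then obtain e where e: "\<bar>e\<bar> = 1" "(int y - int x) mod int k = e mod int k"
  proof cases
    case 1
    then have "(int y - int x) mod int k = 1 mod int k" by (simp add: mod_diff_left_eq)
    then show ?thesis using that[of 1] by simp
  next
    case 2
    then have "(int y - int x) mod int k = (- 1) mod int k" by (simp add: mod_diff_right_eq)
    then show ?thesis using that[of "- 1"] by simp
  qed
  then show ?thesis using circ_norm_cong[OF e(2)] circ_norm_le_abs[of "int k" e] k by simp
qed

context
  fixes m n :: nat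
  assumes m: "m > 0" and n: "n > 0"
begin

lemma torus_shift_in_V: "torus_shift m n P d \<in> torus_V m n"
  using m n by (simp add: torus_shift_def mem_torus_V nat_less_iff)

lemma int_torus_shift:
  "int (fst (torus_shift m n P d)) = (int (fst P) + fst d) mod int m"
  "int (snd (torus_shift m n P d)) = (int (snd P) + snd d) mod int n"
  using m n by (simp_all add: torus_shift_def)

lemma torus_dist_shift:
  "torus_dist m n (torus_shift m n P (a, b)) (torus_shift m n P (a', b'))
     = circ_norm (int m) (a' - a) + circ_norm (int n) (b' - b)"
proof -
  have "((p + y) mod k - (p + x) mod k) mod k = (y - x) mod k" for p x y k :: int
    by (metis add_diff_cancel_left mod_diff_eq)
  from circ_norm_cong[OF this] show ?thesis
    unfolding torus_dist_def int_torus_shift by simp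
qed

lemma torus_shift_diff:
  assumes "P \<in> torus_V m n" "u \<in> torus_V m n"
  shows "torus_shift m n P (int (fst u) - int (fst P), int (snd u) - int (snd P)) = u"
  using assms by (cases u) (simp add: torus_shift_def mem_torus_V)

lemma torus_shift_zero: "P \<in> torus_V m n \<Longrightarrow> torus_shift m n P (0, 0) = P"
  using torus_shift_diff[of P P] by simp

lemma torus_shift_shift:
  "torus_shift m n (torus_shift m n P (a, b)) (a', b') = torus_shift m n P (a + a', b + b')"
  using m n by (simp add: torus_shift_def mod_add_left_eq add.assoc)

lemma torus_shift_eq_iff:
  "torus_shift m n P (a, b) = torus_shift m n P (a', b') \<longleftrightarrow>
     a mod int m = a' mod int m \<and> b mod int n = b' mod int n"
proof -
  have nat_mod: "nat (x mod k) = nat (y mod k) \<longleftrightarrow> x mod k = y mod k" if "k > 0" for x y k :: int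
    using that by (metis nat_eq_iff2 pos_mod_sign)
  have cancel: "(p + x) mod k = (p + y) mod k \<longleftrightarrow> x mod k = y mod k" for p x y k :: int
    by (metis add_diff_cancel_left' mod_add_cong mod_diff_left_eq)
  show ?thesis
    using m n by (simp add: torus_shift_def nat_mod cancel)
qed

lemma torus_dist_shift_self:
  "P \<in> torus_V m n \<Longrightarrow> torus_dist m n P (torus_shift m n P (a, b)) = circ_norm (int m) a + circ_norm (int n) b"
  using torus_dist_shift[of P 0 0 a b] torus_shift_zero by simp

lemma torus_dist_sym: "torus_dist m n u v = torus_dist m n v u"
  using m n by (simp add: torus_dist_def circ_norm_minus_commute)

lemma torus_dist_nonneg: "torus_dist m n u v \<ge> 0"
  using m n by (simp add: torus_dist_def circ_norm_nonneg add_nonneg_nonneg)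

lemma torus_dist_triangle: "torus_dist m n u w \<le> torus_dist m n u v + torus_dist m n v w"
  using m n circ_norm_triangle[of "int m" "int (fst v) - int (fst u)" "int (fst w) - int (fst v)"]
    circ_norm_triangle[of "int n" "int (snd v) - int (snd u)" "int (snd w) - int (snd v)"]
  by (simp add: torus_dist_def)

lemma torus_shift_geodesic:
  assumes "P \<in> torus_V m n" "w \<in> torus_V m n"
  obtains a b where "w = torus_shift m n P (a, b)" "\<bar>a\<bar> + \<bar>b\<bar> = torus_dist m n P w"
    "- int m < 2 * a" "- int n < 2 * b"
proof -
  define a where "a = int (fst w) - int (fst P)"
  define b where "b = int (snd w) - int (snd P)"
  have "w = torus_shift m n P (a, b)"
    using torus_shift_diff[OF assms] by (simp add: a_def b_def)
  also have "\<dots> = torus_shift m n P (circ_rep (int m) a, circ_rep (int n) b)"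
    using torus_shift_eq_iff circ_rep_mod by simp
  finally show ?thesis
    using that abs_circ_rep circ_rep_lower m n by (simp add: torus_dist_def a_def b_def)
qed

lemma torus_E_unit_shift:
  assumes "u \<in> torus_V m n" "\<bar>a\<bar> + \<bar>b\<bar> = 1"
  shows "torus_E m n u (torus_shift m n u (a, b))"
proof -
  have "(a = 1 \<or> a = -1) \<and> b = 0 \<or> a = 0 \<and> (b = 1 \<or> b = -1)" using assms(2) by arith
  then show ?thesis
    using assms(1) cyc_adj_succ cyc_adj_pred
    by (auto simp: torus_E_def cart_adj_def torus_shift_def mem_torus_V simp flip: of_nat_mod)
qed

lemma torus_dist_le_1_of_adj: "torus_E m n u w \<Longrightarrow> torus_dist m n u w \<le> 1"
  by (auto simp: torus_E_def cart_adj_def torus_dist_def dest: circ_norm_cyc_adj)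

lemma torus_dist_le_walk: "walk (torus_V m n) (torus_E m n) k u v \<Longrightarrow> torus_dist m n u v \<le> int k"
proof (induction rule: walk.induct)
  case (walkS u w k v)
  then show ?case
    using torus_dist_triangle[of u v w] torus_dist_le_1_of_adj by fastforce
qed simp

lemma walk_shift:
  "u \<in> torus_V m n \<Longrightarrow> \<bar>a\<bar> + \<bar>b\<bar> = int k \<Longrightarrow>
     walk (torus_V m n) (torus_E m n) k u (torus_shift m n u (a, b))"
proof (induction k arbitrary: u a b)
  case 0
  then have "a = 0" "b = 0" by auto
  then show ?case using 0 torus_shift_zero by (simp add: walk0)
next
  case (Suc k)
  define e where "e = (if a \<noteq> 0 then (sgn a, 0) else (0, sgn b))"
  have unit: "\<bar>fst e\<bar> + \<bar>snd e\<bar> = 1" and rest: "\<bar>a - fst e\<bar> + \<bar>b - snd e\<bar> = int k"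
    using Suc.prems(2) by (auto simp: e_def sgn_if)
  let ?u' = "torus_shift m n u e"
  have "walk (torus_V m n) (torus_E m n) k ?u' (torus_shift m n ?u' (a - fst e, b - snd e))"
    using Suc.IH[OF torus_shift_in_V rest] .
  moreover have "torus_shift m n ?u' (a - fst e, b - snd e) = torus_shift m n u (a, b)"
    using torus_shift_shift[of u "fst e" "snd e"] by simp
  moreover have "torus_E m n u ?u'"
    using torus_E_unit_shift[OF Suc.prems(1) unit] by simp
  ultimately show ?case using Suc.prems(1) by (metis walkS)
qed

lemma walk_torus_dist:
  assumes "u \<in> torus_V m n" "v \<in> torus_V m n"
  shows "walk (torus_V m n) (torus_E m n) (nat (torus_dist m n u v)) u v"
proof -
  obtain a b where "v = torus_shift m n u (a, b)" "\<bar>a\<bar> + \<bar>b\<bar> = torus_dist m n u v"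
    using torus_shift_geodesic[OF assms] .
  then show ?thesis using walk_shift[OF assms(1)] torus_dist_nonneg by simp
qed

lemma gdist_torus:
  "u \<in> torus_V m n \<Longrightarrow> v \<in> torus_V m n \<Longrightarrow>
     gdist (torus_V m n) (torus_E m n) u v = nat (torus_dist m n u v)"
  unfolding gdist_def
  by (rule Least_equality) (auto simp: walk_torus_dist dest: torus_dist_le_walk)

lemma hears_torus_iff:
  "hears (torus_V m n) (torus_E m n) f u v \<longleftrightarrow>
     0 < f v \<and> u \<in> torus_V m n \<and> v \<in> torus_V m n \<and> torus_dist m n v u \<le> int (f v)"
  unfolding hears_def
  using walk_in_V walk_torus_dist gdist_torus torus_dist_nonneg by (smt (verit) nat_le_iff)

lemma torus_dist_midpoint:
  assumes "x \<in> torus_V m n" "y \<in> torus_V m n" "torus_dist m n x y \<le> int (r + s)"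
  obtains u where "u \<in> torus_V m n" "torus_dist m n x u \<le> int r" "torus_dist m n u y \<le> int s"
proof (cases "torus_dist m n x y \<le> int r")
  case True
  then show ?thesis using that[of y] assms by simp
next
  case False
  define k where "k = nat (torus_dist m n x y)"
  have "k = r + (k - r)" using False k_def by auto
  then obtain u where u: "walk (torus_V m n) (torus_E m n) r x u" "walk (torus_V m n) (torus_E m n) (k - r) u y"
    using walk_split walk_torus_dist[OF assms(1,2)] k_def by metis
  moreover have "int (k - r) \<le> int s" using assms(3) False k_def by auto
  ultimately show ?thesis
    using that walk_in_V torus_dist_le_walk by (meson order_trans)
qed

end

section \<open>Hearing counts in \<open>C\<^sub>4 \<box> C\<^sub>n\<close>\<close>

definition covers :: "nat \<Rightarrow> (nat \<times> nat \<Rightarrow> nat) \<Rightarrow> nat \<times> nat \<Rightarrow> nat \<times> nat \<Rightarrow> bool" where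
  "covers n f w u \<longleftrightarrow> w \<in> torus_V 4 n \<and> 0 < f w \<and> torus_dist 4 n w u \<le> int (f w)"

definition cover_count :: "nat \<Rightarrow> (nat \<times> nat \<Rightarrow> nat) \<Rightarrow> nat \<times> nat \<Rightarrow> nat" where
  "cover_count n f u = card {w \<in> torus_V 4 n. covers n f w u}"

definition cover_excess :: "nat \<Rightarrow> (nat \<times> nat \<Rightarrow> nat) \<Rightarrow> nat" where
  "cover_excess n f = (\<Sum>u\<in>torus_V 4 n. cover_count n f u - 1)"

definition multiply_covered :: "nat \<Rightarrow> (nat \<times> nat \<Rightarrow> nat) \<Rightarrow> nat \<times> nat \<Rightarrow> bool" where
  "multiply_covered n f u \<longleftrightarrow> (\<exists>w1 w2. w1 \<noteq> w2 \<and> covers n f w1 u \<and> covers n f w2 u)"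

lemma dominating_bcast2_torus_iff:
  assumes "n > 0"
  shows "dominating_bcast2 (torus_V 4 n) (torus_E 4 n) f \<longleftrightarrow>
           broadcast2 (torus_V 4 n) f \<and> (\<forall>u\<in>torus_V 4 n. \<exists>w. covers n f w u)"
proof -
  have "hears (torus_V 4 n) (torus_E 4 n) f u w \<longleftrightarrow> covers n f w u \<and> u \<in> torus_V 4 n" for u w
    using hears_torus_iff[of 4 n f u w] assms by (auto simp: covers_def)
  then show ?thesis unfolding dominating_bcast2_def covers_def by blast
qed

definition ball2_offsets :: "(int \<times> int) set" where
  "ball2_offsets = {(0,0), (0,1), (0,-1), (0,2), (0,-2), (1,0), (-1,0), (1,1), (1,-1), (-1,1), (-1,-1), (2,0)}"

definition ball1_offsets :: "(int \<times> int) set" where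
  "ball1_offsets = {(0,0), (0,1), (0,-1), (1,0), (-1,0)}"

text \<open>On \<open>C\<^sub>4\<close> the row offsets \<open>2\<close> and \<open>-2\<close> coincide, so a ball of radius 2 has at most 12 vertices.\<close>

lemma torus_ball2_offsets:
  assumes "n > 0" "t \<in> torus_V 4 n" "w \<in> torus_V 4 n" "torus_dist 4 n t w \<le> 2"
  obtains a b where "(a, b) \<in> ball2_offsets" "w = torus_shift 4 n t (a, b)"
proof -
  obtain a b where ab: "w = torus_shift 4 n t (a, b)" "\<bar>a\<bar> + \<bar>b\<bar> = torus_dist 4 n t w"
    "- 4 < 2 * a" "- int n < 2 * b"
    by (rule torus_shift_geodesic[of 4 n t w]) (use assms in auto)
  then have small: "\<bar>a\<bar> + \<bar>b\<bar> \<le> 2" and "-1 \<le> a" using assms(4) by auto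
  then have "a = -1 \<or> a = 0 \<or> a = 1 \<or> a = 2" "b = -2 \<or> b = -1 \<or> b = 0 \<or> b = 1 \<or> b = 2"
    by auto
  then have "(a, b) \<in> ball2_offsets"
    using small unfolding ball2_offsets_def by (elim disjE) simp_all
  with ab(1) that show ?thesis by blast
qed

lemma torus_ball1_offsets:
  assumes "n > 0" "t \<in> torus_V 4 n" "w \<in> torus_V 4 n" "torus_dist 4 n t w \<le> 1"
  obtains a b where "(a, b) \<in> ball1_offsets" "w = torus_shift 4 n t (a, b)"
proof -
  obtain a b where ab: "w = torus_shift 4 n t (a, b)" "\<bar>a\<bar> + \<bar>b\<bar> = torus_dist 4 n t w"
    "- 4 < 2 * a" "- int n < 2 * b"
    by (rule torus_shift_geodesic[of 4 n t w]) (use assms in auto)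
  then have small: "\<bar>a\<bar> + \<bar>b\<bar> \<le> 1" using assms(4) by auto
  then have "a = -1 \<or> a = 0 \<or> a = 1" "b = -1 \<or> b = 0 \<or> b = 1"
    by auto
  then have "(a, b) \<in> ball1_offsets"
    using small unfolding ball1_offsets_def by (elim disjE) simp_all
  with ab(1) that show ?thesis by blast
qed

lemma card_torus_ball2: "n > 0 \<Longrightarrow> t \<in> torus_V 4 n \<Longrightarrow> card {u \<in> torus_V 4 n. torus_dist 4 n t u \<le> 2} \<le> 12"
proof -
  assume "n > 0" "t \<in> torus_V 4 n"
  then have "{u \<in> torus_V 4 n. torus_dist 4 n t u \<le> 2} \<subseteq> torus_shift 4 n t ` ball2_offsets"
    by (auto elim: torus_ball2_offsets)
  then have "card {u \<in> torus_V 4 n. torus_dist 4 n t u \<le> 2} \<le> card (torus_shift 4 n t ` ball2_offsets)"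
    by (rule card_mono[rotated]) (simp add: ball2_offsets_def)
  also have "\<dots> \<le> card ball2_offsets"
    by (rule card_image_le) (simp add: ball2_offsets_def)
  finally show ?thesis by (simp add: ball2_offsets_def)
qed

lemma card_torus_ball1: "n > 0 \<Longrightarrow> t \<in> torus_V 4 n \<Longrightarrow> card {u \<in> torus_V 4 n. torus_dist 4 n t u \<le> 1} \<le> 5"
proof -
  assume "n > 0" "t \<in> torus_V 4 n"
  then have "{u \<in> torus_V 4 n. torus_dist 4 n t u \<le> 1} \<subseteq> torus_shift 4 n t ` ball1_offsets"
    by (auto elim: torus_ball1_offsets)
  then have "card {u \<in> torus_V 4 n. torus_dist 4 n t u \<le> 1} \<le> card (torus_shift 4 n t ` ball1_offsets)"
    by (rule card_mono[rotated]) (simp add: ball1_offsets_def)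
  also have "\<dots> \<le> card ball1_offsets"
    by (rule card_image_le) (simp add: ball1_offsets_def)
  finally show ?thesis by (simp add: ball1_offsets_def)
qed

lemma sum_cover_count_le:
  assumes "n > 0" "\<forall>w\<in>torus_V 4 n. f w \<le> 2"
  shows "(\<Sum>u\<in>torus_V 4 n. cover_count n f u)
           \<le> 5 * card {w \<in> torus_V 4 n. f w = 1} + 12 * card {w \<in> torus_V 4 n. f w = 2}"
proof -
  let ?V = "torus_V 4 n"
  have "(\<Sum>u\<in>?V. cover_count n f u) = (\<Sum>u\<in>?V. \<Sum>w\<in>?V. of_bool (covers n f w u))"
    unfolding cover_count_def by (simp add: Collect_conj_eq)
  also have "\<dots> = (\<Sum>w\<in>?V. card {u \<in> ?V. covers n f w u})"
    by (subst sum.swap) (simp add: Collect_conj_eq)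
  also have "\<dots> \<le> (\<Sum>w\<in>?V. 5 * of_bool (f w = 1) + 12 * of_bool (f w = 2))"
  proof (rule sum_mono)
    fix w assume w: "w \<in> ?V"
    consider "f w = 0" | "f w = 1" | "f w = 2" using assms(2) w by force
    then show "card {u \<in> ?V. covers n f w u} \<le> 5 * of_bool (f w = 1) + 12 * of_bool (f w = 2)"
      by cases (use w card_torus_ball1[OF assms(1) w] card_torus_ball2[OF assms(1) w]
                in \<open>simp_all add: covers_def\<close>)
  qed
  also have "\<dots> = 5 * card {w \<in> ?V. f w = 1} + 12 * card {w \<in> ?V. f w = 2}"
    by (simp add: sum.distrib sum_distrib_left Collect_conj_eq)
  finally show ?thesis .
qed

lemma bcast_cost_eq:
  assumes "\<forall>w\<in>torus_V 4 n. f w \<le> 2"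
  shows "bcast_cost (torus_V 4 n) f = card {w \<in> torus_V 4 n. f w = 1} + 2 * card {w \<in> torus_V 4 n. f w = 2}"
proof -
  have "bcast_cost (torus_V 4 n) f = (\<Sum>w\<in>torus_V 4 n. of_bool (f w = 1) + 2 * of_bool (f w = 2))"
    unfolding bcast_cost_def by (rule sum.cong) (use assms in force)+
  then show ?thesis by (simp add: sum.distrib sum_distrib_left Collect_conj_eq)
qed

lemma card_le_cover_count:
  "finite W \<Longrightarrow> (\<And>w. w \<in> W \<Longrightarrow> covers n f w u) \<Longrightarrow> card W \<le> cover_count n f u"
  unfolding cover_count_def by (rule card_mono) (auto simp: covers_def)

lemma sum_cover_count_le_excess:
  "A \<subseteq> torus_V 4 n \<Longrightarrow> (\<Sum>u\<in>A. cover_count n f u - 1) \<le> cover_excess n f"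
  unfolding cover_excess_def by (rule sum_mono2) auto

lemma sum_cover_count_eq_excess:
  assumes "\<forall>u\<in>torus_V 4 n. \<exists>w. covers n f w u"
  shows "(\<Sum>u\<in>torus_V 4 n. cover_count n f u) = 4 * n + cover_excess n f"
proof -
  have "cover_count n f u = (cover_count n f u - 1) + 1" if "u \<in> torus_V 4 n" for u
    using assms that card_le_cover_count[of "{w}" n f u for w] by fastforce
  then have "(\<Sum>u\<in>torus_V 4 n. cover_count n f u) = (\<Sum>u\<in>torus_V 4 n. (cover_count n f u - 1) + 1)"
    by (rule sum.cong[OF refl])
  then show ?thesis by (simp add: sum_Suc cover_excess_def card_torus_V)
qed

lemma cover_excess_ge_cover_count:
  "u \<in> torus_V 4 n \<Longrightarrow> cover_count n f u - 1 \<le> cover_excess n f"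
  using sum_cover_count_le_excess[of "{u}" n f] by simp

lemma cover_count_ge_2: "multiply_covered n f u \<Longrightarrow> cover_count n f u \<ge> 2"
  unfolding multiply_covered_def using card_le_cover_count[of "{w1, w2}" n f u for w1 w2]
  by (metis card_2_iff empty_iff finite.emptyI finite.insertI insert_iff)

section \<open>Forced chains of strong vertices\<close>

text \<open>Disjoint balls of radius 2 have centres at distance at least 5, and \<open>Q + (2,3)\<close> is the only
  vertex within distance 2 of \<open>Q + (2,1)\<close> that is that far from \<open>Q\<close>.\<close>

lemma disjoint_cover_of_2_1_is_2_3:
  assumes n: "n > 0" and Q: "Q \<in> torus_V 4 n" and w: "w \<in> torus_V 4 n"
    and near: "torus_dist 4 n w (torus_shift 4 n Q (2, 1)) \<le> 2"
    and disj: "\<forall>u\<in>torus_V 4 n. torus_dist 4 n Q u \<le> 2 \<longrightarrow> torus_dist 4 n w u > 2"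
  shows "w = torus_shift 4 n Q (2, 3)"
proof -
  have far: "torus_dist 4 n Q w > 4"
  proof (rule ccontr)
    assume "\<not> torus_dist 4 n Q w > 4"
    then have "torus_dist 4 n Q w \<le> int (2 + 2)" by simp
    then obtain u where "u \<in> torus_V 4 n" "torus_dist 4 n Q u \<le> 2" "torus_dist 4 n u w \<le> 2"
      using torus_dist_midpoint[of 4 n Q w 2 2] n Q w by auto
    then show False using disj torus_dist_sym[of 4 n u w] n by force
  qed
  have "torus_shift 4 n Q (2, 1) \<in> torus_V 4 n" using torus_shift_in_V[of 4 n] n by simp
  moreover have "torus_dist 4 n (torus_shift 4 n Q (2, 1)) w \<le> 2"
    using near torus_dist_sym[of 4 n w] n by simp
  ultimately obtain a b where ab: "(a, b) \<in> ball2_offsets"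
    "w = torus_shift 4 n (torus_shift 4 n Q (2, 1)) (a, b)"
    using torus_ball2_offsets[OF n _ w] by blast
  then have "w = torus_shift 4 n Q (2 + a, 1 + b)" using torus_shift_shift[of 4 n] n by simp
  then have "torus_dist 4 n Q w = circ_norm 4 (2 + a) + circ_norm (int n) (1 + b)"
    using torus_dist_shift_self[of 4 n Q] n Q by simp
  also have "\<dots> \<le> circ_norm 4 (2 + a) + \<bar>1 + b\<bar>" using circ_norm_le_abs[of "int n"] n by simp
  finally have "(a, b) = (0, 2)"
    using far ab(1) unfolding ball2_offsets_def by (auto simp: circ_norm_def)
  then show ?thesis using \<open>w = torus_shift 4 n Q (2 + a, 1 + b)\<close> by simp
qed

lemma knight_chain:
  assumes n: "n > 0" and Q0: "Q0 \<in> torus_V 4 n" "f Q0 = 2"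
    and dom: "\<forall>u\<in>torus_V 4 n. \<exists>w. covers n f w u"
    and step: "\<And>j w. j < N \<Longrightarrow> f (torus_shift 4 n Q0 (2 * int j, 3 * int j)) = 2 \<Longrightarrow>
      covers n f w (torus_shift 4 n Q0 (2 * int j + 2, 3 * int j + 1)) \<Longrightarrow>
      f w = 2 \<and> (\<forall>u\<in>torus_V 4 n. torus_dist 4 n (torus_shift 4 n Q0 (2 * int j, 3 * int j)) u \<le> 2
                                  \<longrightarrow> torus_dist 4 n w u > 2)"
  shows "j \<le> N \<Longrightarrow> f (torus_shift 4 n Q0 (2 * int j, 3 * int j)) = 2"
proof (induction j)
  case 0
  then show ?case using Q0 torus_shift_zero[of 4 n] n by simp
next
  case (Suc j)
  let ?Q = "torus_shift 4 n Q0 (2 * int j, 3 * int j)"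
  have shift: "torus_shift 4 n ?Q (a, b) = torus_shift 4 n Q0 (2 * int j + a, 3 * int j + b)" for a b
    using torus_shift_shift[of 4 n] n by simp
  have "torus_shift 4 n ?Q (2, 1) \<in> torus_V 4 n" using torus_shift_in_V[of 4 n] n by simp
  then obtain w where cw: "covers n f w (torus_shift 4 n ?Q (2, 1))"
    using dom by blast
  have "f ?Q = 2" using Suc by simp
  then have "f w = 2" and disj: "\<forall>u\<in>torus_V 4 n. torus_dist 4 n ?Q u \<le> 2 \<longrightarrow> torus_dist 4 n w u > 2"
    using step[of j w] cw Suc.prems shift by simp_all
  moreover have "w = torus_shift 4 n ?Q (2, 3)"
    using disjoint_cover_of_2_1_is_2_3[OF n _ _ _ disj] torus_shift_in_V[of 4 n] cw \<open>f w = 2\<close> n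
    by (simp add: covers_def)
  ultimately show ?case using shift by (simp add: algebra_simps)
qed

text \<open>The forced chain starting at \<open>w\<^sub>0\<close> reaches \<open>w\<^sub>0 + (2(2k+1), 3(2k+1)) = w\<^sub>0 + (2,0)\<close>,
  whose ball contains \<open>w\<^sub>0\<close>.\<close>

lemma no_perfect_cover:
  assumes n: "n = 6 * k + 3"
    and dom: "\<forall>u\<in>torus_V 4 n. \<exists>w. covers n f w u"
    and power2: "\<forall>w\<in>torus_V 4 n. 0 < f w \<longrightarrow> f w = 2"
    and unique: "\<And>u w1 w2. u \<in> torus_V 4 n \<Longrightarrow> covers n f w1 u \<Longrightarrow> covers n f w2 u \<Longrightarrow> w1 = w2"
    and w0: "w0 \<in> torus_V 4 n" "f w0 = 2"
  shows False
proof -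
  have n_pos: "n > 0" using n by simp
  have chain: "f (torus_shift 4 n w0 (2 * int j, 3 * int j)) = 2" if "j \<le> 2 * k + 1" for j
  proof (rule knight_chain[OF n_pos w0 dom _ that])
    fix j w
    let ?Q = "torus_shift 4 n w0 (2 * int j, 3 * int j)"
    let ?t = "torus_shift 4 n w0 (2 * int j + 2, 3 * int j + 1)"
    assume fQ: "f ?Q = 2" and cw: "covers n f w ?t"
    have QV: "?Q \<in> torus_V 4 n" using torus_shift_in_V[of 4 n] n_pos by simp
    have "?t = torus_shift 4 n ?Q (2, 1)" using torus_shift_shift[of 4 n] n_pos by simp
    then have "torus_dist 4 n ?Q ?t = 3"
      using torus_dist_shift_self[of 4 n ?Q 2 1] torus_shift_in_V[of 4 n] n_pos circ_norm_eq_abs[of 1 "int n"] n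
      by (simp add: circ_norm_def)
    then have "?Q \<noteq> w" using cw fQ by (auto simp: covers_def)
    moreover have "f w = 2" using cw power2 by (simp add: covers_def)
    moreover have "torus_dist 4 n w u > 2" if "u \<in> torus_V 4 n" "torus_dist 4 n ?Q u \<le> 2" for u
    proof (rule ccontr)
      assume "\<not> torus_dist 4 n w u > 2"
      then have "covers n f ?Q u" "covers n f w u"
        using that QV fQ cw \<open>f w = 2\<close> by (auto simp: covers_def)
      then show False using unique[OF that(1)] \<open>?Q \<noteq> w\<close> by blast
    qed
    ultimately show "f w = 2 \<and> (\<forall>u\<in>torus_V 4 n. torus_dist 4 n ?Q u \<le> 2 \<longrightarrow> torus_dist 4 n w u > 2)"
      by blast
  qed
  have "torus_shift 4 n w0 (2 * int (2 * k + 1), 3 * int (2 * k + 1)) = torus_shift 4 n w0 (2, 0)"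
    using torus_shift_eq_iff[of 4 n] n by (simp add: add.commute)
  then have f20: "f (torus_shift 4 n w0 (2, 0)) = 2" using chain[of "2 * k + 1"] by simp
  have "torus_shift 4 n w0 (2, 0) \<noteq> w0"
    using torus_shift_eq_iff[of 4 n w0 2 0 0 0] torus_shift_zero[of 4 n w0] n w0 by auto
  moreover have "covers n f (torus_shift 4 n w0 (2, 0)) w0" "covers n f w0 w0"
    using f20 w0 torus_dist_shift_self[of 4 n w0 2 0] torus_dist_sym[of 4 n w0] torus_shift_in_V[of 4 n] n
    by (auto simp: covers_def circ_norm_def)
  ultimately show False using unique w0 by blast
qed

section \<open>One weak vertex and at most one overlap\<close>

locale near_perfect_cover =
  fixes n :: nat and f :: "nat \<times> nat \<Rightarrow> nat" and v :: "nat \<times> nat"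
  assumes n_ge_7: "n \<ge> 7"
    and power_le_2: "\<forall>w\<in>torus_V 4 n. f w \<le> 2"
    and dom: "\<forall>u\<in>torus_V 4 n. \<exists>w. covers n f w u"
    and v: "v \<in> torus_V 4 n" "f v = 1"
    and unique_weak: "\<forall>w\<in>torus_V 4 n. f w = 1 \<longrightarrow> w = v"
    and single_overlap: "\<And>u1 u2. u1 \<in> torus_V 4 n \<Longrightarrow> u2 \<in> torus_V 4 n \<Longrightarrow>
      multiply_covered n f u1 \<Longrightarrow> multiply_covered n f u2 \<Longrightarrow> u1 = u2"
    and no_triple: "\<And>u w1 w2 w3. u \<in> torus_V 4 n \<Longrightarrow>
      covers n f w1 u \<Longrightarrow> covers n f w2 u \<Longrightarrow> covers n f w3 u \<Longrightarrow> w1 \<noteq> w2 \<Longrightarrow> w1 \<noteq> w3 \<Longrightarrow> w2 = w3"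
begin

text \<open>\<open>vertex_at s x y\<close> is the vertex \<open>x\<close> rows and \<open>y\<close> columns away from \<open>v\<close>, with the column
  direction reversed when \<open>s = -1\<close>; the local arguments below hold for both orientations.\<close>

definition vertex_at :: "int \<Rightarrow> int \<Rightarrow> int \<Rightarrow> nat \<times> nat" where
  "vertex_at s x y = torus_shift 4 n v (x, s * y)"

lemma n_pos: "n > 0"
  using n_ge_7 by simp

lemma vertex_at_in_V [simp]: "vertex_at s x y \<in> torus_V 4 n"
  unfolding vertex_at_def using torus_shift_in_V[of 4 n] n_pos by simp

lemma vertex_at_0_0 [simp]: "vertex_at s 0 0 = v"
  unfolding vertex_at_def using torus_shift_zero[of 4 n] n_pos v by simp

lemma circ_norm_n_small [simp]: "\<bar>d\<bar> \<le> 3 \<Longrightarrow> circ_norm (int n) d = \<bar>d\<bar>"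
  using circ_norm_eq_abs[of d "int n"] n_ge_7 by simp

lemma torus_dist_vertex_at [simp]:
  assumes "s = 1 \<or> s = -1"
  shows "torus_dist 4 n (vertex_at s x y) (vertex_at s x' y') = circ_norm 4 (x' - x) + circ_norm (int n) (y' - y)"
  using assms torus_dist_shift[of 4 n v x "s * y" x' "s * y'"] n_pos circ_norm_minus_commute[of "int n" y' y]
  by (auto simp: vertex_at_def algebra_simps)

lemma torus_shift_vertex_at: "torus_shift 4 n (vertex_at 1 x y) (a, b) = vertex_at 1 (x + a) (y + b)"
  unfolding vertex_at_def using torus_shift_shift[of 4 n] n_pos by simp

lemma vertex_at_neq:
  assumes "s = 1 \<or> s = -1" "x mod 4 \<noteq> x' mod 4 \<or> 0 < \<bar>y - y'\<bar> \<and> \<bar>y - y'\<bar> < int n"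
  shows "vertex_at s x y \<noteq> vertex_at s x' y'"
proof
  assume "vertex_at s x y = vertex_at s x' y'"
  then have x: "x mod 4 = x' mod 4" and "(s * y) mod int n = (s * y') mod int n"
    unfolding vertex_at_def using torus_shift_eq_iff[of 4 n] n_pos by auto
  moreover have "int n dvd s * (y - y') \<Longrightarrow> int n dvd y - y'"
    using assms(1) by (auto simp: dvd_diff_commute)
  ultimately have "int n dvd y - y'" by (simp add: mod_eq_dvd_iff right_diff_distrib)
  then show False using assms x zdvd_imp_le[of "int n" "\<bar>y - y'\<bar>"] by auto
qed

lemma strong_if_not_v: "w \<in> torus_V 4 n \<Longrightarrow> 0 < f w \<Longrightarrow> w \<noteq> v \<Longrightarrow> f w = 2"
  using power_le_2 unique_weak by force

lemma covers_from_v: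
  "s = 1 \<or> s = -1 \<Longrightarrow> circ_norm 4 x + circ_norm (int n) y \<le> 1 \<Longrightarrow> covers n f v (vertex_at s x y)"
  using torus_dist_vertex_at[of s 0 0 x y] v by (simp add: covers_def)

lemma covers_from_strong:
  "s = 1 \<or> s = -1 \<Longrightarrow> f (vertex_at s a b) = 2 \<Longrightarrow> circ_norm 4 (x - a) + circ_norm (int n) (y - b) \<le> 2 \<Longrightarrow>
     covers n f (vertex_at s a b) (vertex_at s x y)"
  using torus_dist_vertex_at[of s a b x y] by (simp add: covers_def)

lemma two_shared:
  assumes "w1 \<noteq> w2" "u1 \<noteq> u2" "u1 \<in> torus_V 4 n" "u2 \<in> torus_V 4 n"
    "covers n f w1 u1" "covers n f w2 u1" "covers n f w1 u2" "covers n f w2 u2"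
  shows False
  using single_overlap[OF assms(3,4)] assms unfolding multiply_covered_def by blast

lemma no_close_strong_pair:
  assumes "w1 \<noteq> w2" "f w1 = 2" "f w2 = 2" "w1 \<in> torus_V 4 n" "w2 \<in> torus_V 4 n"
    "torus_dist 4 n w1 w2 \<le> 2"
  shows False
proof -
  have "covers n f w1 w1" "covers n f w2 w2" using assms by (simp_all add: covers_def)
  moreover have "covers n f w1 w2" "covers n f w2 w1"
    using assms torus_dist_sym[of 4 n w1 w2] n_pos by (simp_all add: covers_def)
  ultimately show False using two_shared[OF assms(1) assms(1,4,5)] by blast
qed

lemma covers_vertex_at_offsets:
  assumes s: "s = 1 \<or> s = -1" and c: "covers n f w (vertex_at s x y)"
  obtains a b where "(a, b) \<in> ball2_offsets" "w = vertex_at s (x + a) (y + b)"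
proof -
  have "w \<in> torus_V 4 n" "torus_dist 4 n w (vertex_at s x y) \<le> 2"
    using c power_le_2 unfolding covers_def by force+
  then have "w \<in> torus_V 4 n" "torus_dist 4 n (vertex_at s x y) w \<le> 2"
    using torus_dist_sym[of 4 n w] n_pos by simp_all
  then obtain a b where ab: "(a, b) \<in> ball2_offsets" "w = torus_shift 4 n (vertex_at s x y) (a, b)"
    using torus_ball2_offsets[OF n_pos vertex_at_in_V] by blast
  have "(a, s * b) \<in> ball2_offsets"
    using ab(1) s unfolding ball2_offsets_def by (cases "s = 1") auto
  moreover have "s * (y + s * b) = s * y + b" using s by auto
  then have "w = vertex_at s (x + a) (y + s * b)"
    using ab(2) torus_shift_shift[of 4 n] n_pos by (simp add: vertex_at_def)
  ultimately show ?thesis using that by blast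
qed

text \<open>A power-2 broadcaster within one column of \<open>v\<close> shares two vertices of that column with \<open>v\<close>.\<close>

lemma no_strong_near_v_column:
  assumes s: "s = 1 \<or> s = -1" and c: "\<bar>c\<bar> \<le> 1"
  shows "f (vertex_at s a c) \<noteq> 2"
proof
  assume f2: "f (vertex_at s a c) = 2"
  have wv: "vertex_at s a c \<noteq> v" using f2 v by auto
  have cw: "covers n f (vertex_at s a c) (vertex_at s x 0)" if "circ_norm 4 (x - a mod 4) \<le> 1" for x
  proof -
    have "circ_norm 4 (x - a) = circ_norm 4 (x - a mod 4)" by (rule circ_norm_cong) (simp add: mod_diff_right_eq)
    then show ?thesis using covers_from_strong[OF s f2, of x 0] that c by simp
  qed
  have cv: "covers n f v (vertex_at s x 0)" if "circ_norm 4 x \<le> 1" for x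
    using covers_from_v[OF s, of x 0] that by simp
  have ne: "vertex_at s x 0 \<noteq> vertex_at s x' 0" if "x mod 4 \<noteq> x' mod 4" for x x'
    using vertex_at_neq[OF s] that by blast
  have shared: False if "circ_norm 4 (x - a mod 4) \<le> 1" "circ_norm 4 (x' - a mod 4) \<le> 1"
    "circ_norm 4 x \<le> 1" "circ_norm 4 x' \<le> 1" "x mod 4 \<noteq> x' mod 4" for x x'
    using two_shared[OF wv ne vertex_at_in_V vertex_at_in_V cw cv cw cv] that by blast
  have "a mod 4 = 0 \<or> a mod 4 = 1 \<or> a mod 4 = 2 \<or> a mod 4 = 3" by arith
  then show False
  proof (elim disjE)
    assume "a mod 4 = 0" then show False using shared[of 0 1] by simp
  next
    assume "a mod 4 = 1" then show False using shared[of 0 1] by simp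
  next
    assume "a mod 4 = 2" then show False using shared[of 1 3] by simp
  next
    assume "a mod 4 = 3" then show False using shared[of 3 0] by simp
  qed
qed

lemma no_strong_at_column_2:
  assumes s: "s = 1 \<or> s = -1" and a: "a mod 4 \<noteq> 2"
  shows "f (vertex_at s a 2) \<noteq> 2"
proof
  assume f2: "f (vertex_at s a 2) = 2"
  have wv: "vertex_at s a 2 \<noteq> v" using f2 v by auto
  have ca: "circ_norm 4 (x - a) = circ_norm 4 (x - a mod 4)" for x
    by (rule circ_norm_cong) (simp add: mod_diff_right_eq)
  have "a mod 4 = 0 \<or> (a mod 4 = 1 \<or> a mod 4 = 3)" using a by arith
  then show False
  proof
    assume a0: "a mod 4 = 0"
    show False
      by (rule two_shared[OF wv vertex_at_neq[OF s, of 0 0 0 1] vertex_at_in_V vertex_at_in_V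
            covers_from_strong[OF s f2, of 0 0] covers_from_v[OF s, of 0 0]
            covers_from_strong[OF s f2, of 0 1] covers_from_v[OF s, of 0 1]])
        (use a0 ca[of 0] n_ge_7 in simp_all)
  next
    assume "a mod 4 = 1 \<or> a mod 4 = 3"
    then have cn: "circ_norm 4 (0 - a) = 1" "circ_norm 4 a = 1"
      using ca[of 0] circ_norm_mod[of 4 a] by (auto simp del: circ_norm_mod)
    show False
      by (rule two_shared[OF wv vertex_at_neq[OF s, of 0 a 1 0] vertex_at_in_V vertex_at_in_V
            covers_from_strong[OF s f2, of 0 1] covers_from_v[OF s, of 0 1]
            covers_from_strong[OF s f2, of a 0] covers_from_v[OF s, of a 0]])
        (use cn n_ge_7 in simp_all)
  qed
qed

lemma torus_dist_v_vertex_at: "s = 1 \<or> s = -1 \<Longrightarrow> torus_dist 4 n v (vertex_at s x y) = circ_norm 4 x + circ_norm (int n) y"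
  using torus_dist_vertex_at[of s 0 0 x y] by simp

lemma no_strong_at_2_3:
  assumes s: "s = 1 \<or> s = -1"
  shows "f (vertex_at s 2 3) \<noteq> 2"
proof
  assume f23: "f (vertex_at s 2 3) = 2"
  obtain w where cw: "covers n f w (vertex_at s 1 1)" using dom vertex_at_in_V by blast
  then have "w \<noteq> v" using v torus_dist_v_vertex_at[OF s, of 1 1] by (auto simp: covers_def)
  then have fw: "f w = 2" using cw strong_if_not_v by (simp add: covers_def)
  obtain a b where "(a, b) \<in> ball2_offsets" "w = vertex_at s (1 + a) (1 + b)"
    using covers_vertex_at_offsets[OF s cw] .
  then have "w = vertex_at s 1 3 \<or> w = vertex_at s 2 2"
    using fw v(2) no_strong_near_v_column[OF s] no_strong_at_column_2[OF s]
    unfolding ball2_offsets_def by auto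
  then show False
  proof
    assume "w = vertex_at s 1 3"
    then show False
      using no_close_strong_pair[OF vertex_at_neq[OF s, of 1 2 3 3]] fw f23 s by simp
  next
    assume "w = vertex_at s 2 2"
    then show False
      using no_close_strong_pair[OF vertex_at_neq[OF s, of 2 2 2 3]] fw f23 s n_ge_7 by simp
  qed
qed

lemma strong_at_2_2:
  assumes s: "s = 1 \<or> s = -1"
  shows "f (vertex_at s 2 2) = 2"
proof -
  obtain w where cw: "covers n f w (vertex_at s 2 1)" using dom vertex_at_in_V by blast
  then have "w \<noteq> v" using v torus_dist_v_vertex_at[OF s, of 2 1] by (auto simp: covers_def)
  then have fw: "f w = 2" using cw strong_if_not_v by (simp add: covers_def)
  obtain a b where "(a, b) \<in> ball2_offsets" "w = vertex_at s (2 + a) (1 + b)"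
    using covers_vertex_at_offsets[OF s cw] .
  then have "w = vertex_at s 2 2 \<or> w = vertex_at s 2 3"
    using fw v(2) no_strong_near_v_column[OF s] no_strong_at_column_2[OF s]
    unfolding ball2_offsets_def by auto
  then show ?thesis using fw no_strong_at_2_3[OF s] by auto
qed

lemma strong_at_2_minus_2: "f (vertex_at 1 2 (-2)) = 2"
proof -
  have "vertex_at (-1) 2 2 = vertex_at 1 2 (-2)" by (simp add: vertex_at_def)
  then show ?thesis using strong_at_2_2[of "-1"] by simp
qed

lemma multiply_covered_at_2_0: "multiply_covered n f (vertex_at 1 2 0)"
proof -
  have "covers n f (vertex_at 1 2 (-2)) (vertex_at 1 2 0)"
    using strong_at_2_minus_2 by (intro covers_from_strong) simp_all
  moreover have "covers n f (vertex_at 1 2 2) (vertex_at 1 2 0)"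
    using strong_at_2_2[of 1] by (intro covers_from_strong) simp_all
  moreover have "vertex_at 1 2 2 \<noteq> vertex_at 1 2 (-2)" using vertex_at_neq[of 1 2 2 2 "-2"] n_ge_7 by simp
  ultimately show ?thesis unfolding multiply_covered_def by blast
qed

lemma knight_step:
  assumes n: "n = 6 * k + 1" and j: "j + 1 < 2 * k"
    and fQ: "f (vertex_at 1 (2 + 2 * int j) (2 + 3 * int j)) = 2"
    and cw: "covers n f w (vertex_at 1 (4 + 2 * int j) (3 + 3 * int j))"
  shows "f w = 2 \<and> (\<forall>u\<in>torus_V 4 n.
           torus_dist 4 n (vertex_at 1 (2 + 2 * int j) (2 + 3 * int j)) u \<le> 2 \<longrightarrow> torus_dist 4 n w u > 2)"
proof -
  let ?Q = "vertex_at 1 (2 + 2 * int j) (2 + 3 * int j)" and ?t = "vertex_at 1 (4 + 2 * int j) (3 + 3 * int j)"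
  have "circ_norm (int n) (3 + 3 * int j) = min (3 + 3 * int j) (int n - (3 + 3 * int j))"
    using circ_norm_eq_min n j by simp
  moreover have "torus_dist 4 n v ?t = circ_norm 4 (4 + 2 * int j) + circ_norm (int n) (3 + 3 * int j)"
    using torus_dist_v_vertex_at[of 1] by simp
  moreover have "circ_norm 4 (4 + 2 * int j) \<ge> 0" by (simp add: circ_norm_nonneg)
  ultimately have "torus_dist 4 n v ?t > 1" using n j by linarith
  then have fw: "f w = 2" using cw v strong_if_not_v by (fastforce simp: covers_def)
  have "?Q \<noteq> w" using cw fQ fw by (auto simp: covers_def)
  moreover have "torus_dist 4 n w u > 2"
    if u: "u \<in> torus_V 4 n" "torus_dist 4 n ?Q u \<le> 2" for u
  proof (rule ccontr)
    txt \<open>The only vertex heard twice is \<open>v + (2,0)\<close>; it is close to \<open>?Q\<close> only for \<open>j = 0\<close>, and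
      then \<open>w\<close> would be its third broadcaster unless \<open>w = v + (2,-2)\<close>, which is too far from \<open>?t\<close>.\<close>
    assume "\<not> torus_dist 4 n w u > 2"
    then have "covers n f ?Q u" "covers n f w u" using u cw fQ fw by (auto simp: covers_def)
    then have "multiply_covered n f u" using \<open>?Q \<noteq> w\<close> unfolding multiply_covered_def by blast
    then have u0: "u = vertex_at 1 2 0" using single_overlap[OF u(1) vertex_at_in_V _ multiply_covered_at_2_0] by blast
    have "circ_norm (int n) (2 + 3 * int j) = min (2 + 3 * int j) (int n - (2 + 3 * int j))"
      using circ_norm_eq_min n j by simp
    moreover have "torus_dist 4 n ?Q u = circ_norm 4 (- 2 * int j) + circ_norm (int n) (2 + 3 * int j)"
      using u0 torus_dist_vertex_at[of 1 _ _ 2 0] circ_norm_uminus[of "int n" "2 + 3 * int j"] n_pos by simp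
    moreover have "circ_norm 4 (- 2 * int j) \<ge> 0" by (simp add: circ_norm_nonneg)
    ultimately have j0: "j = 0" using u(2) n j by linarith
    have "covers n f (vertex_at 1 2 (-2)) u" "covers n f (vertex_at 1 2 2) u"
      using u0 strong_at_2_minus_2 strong_at_2_2[of 1] by (auto intro: covers_from_strong)
    moreover have "w \<noteq> vertex_at 1 2 2" using \<open>?Q \<noteq> w\<close> j0 by simp
    moreover have "vertex_at 1 2 2 \<noteq> vertex_at 1 2 (-2)" using vertex_at_neq[of 1 2 2 2 "-2"] n_ge_7 by simp
    ultimately have "w = vertex_at 1 2 (-2)" using no_triple[OF u(1)] \<open>covers n f w u\<close> by metis
    moreover have "circ_norm (int n) 5 > 0" using circ_norm_eq_min[of 5 "int n"] n_ge_7 by simp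
    ultimately show False using cw fw j0 by (simp add: covers_def)
  qed
  ultimately show ?thesis using fw by blast
qed

text \<open>Starting from \<open>v + (2,2)\<close>, the forced chain wraps around the torus when \<open>n = 6k + 1\<close> and
  ends at \<open>v + (0,-2)\<close>, which cannot carry power 2.\<close>

theorem mod_6_ne_1: "n mod 6 \<noteq> 1"
proof
  assume "n mod 6 = 1"
  define k where "k = n div 6"
  have n: "n = 6 * k + 1" using \<open>n mod 6 = 1\<close> div_mult_mod_eq[of n 6] by (simp add: k_def)
  then have k: "k \<ge> 1" using n_ge_7 by simp
  have Q: "torus_shift 4 n (vertex_at 1 2 2) (2 * int j, 3 * int j) = vertex_at 1 (2 + 2 * int j) (2 + 3 * int j)"
    and t: "torus_shift 4 n (vertex_at 1 2 2) (2 * int j + 2, 3 * int j + 1) = vertex_at 1 (4 + 2 * int j) (3 + 3 * int j)"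
    for j by (simp_all add: torus_shift_vertex_at algebra_simps)
  have "f (vertex_at 1 2 2) = 2" using strong_at_2_2 by simp
  have "f (torus_shift 4 n (vertex_at 1 2 2) (2 * int j, 3 * int j)) = 2" if "j \<le> 2 * k - 1" for j
  proof (rule knight_chain[OF n_pos vertex_at_in_V \<open>f (vertex_at 1 2 2) = 2\<close> dom _ that])
    fix j w
    assume "j < 2 * k - 1" "f (torus_shift 4 n (vertex_at 1 2 2) (2 * int j, 3 * int j)) = 2"
      "covers n f w (torus_shift 4 n (vertex_at 1 2 2) (2 * int j + 2, 3 * int j + 1))"
    then show "f w = 2 \<and> (\<forall>u\<in>torus_V 4 n. torus_dist 4 n (torus_shift 4 n (vertex_at 1 2 2) (2 * int j, 3 * int j)) u \<le> 2
                           \<longrightarrow> torus_dist 4 n w u > 2)"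
      using knight_step[OF n, of j w] unfolding Q t by simp
  qed
  then have "f (vertex_at 1 (2 + 2 * int j) (2 + 3 * int j)) = 2" if "j \<le> 2 * k - 1" for j
    using that Q by simp
  from this[of "2 * k - 1"] have "f (vertex_at 1 (4 * int k) (6 * int k - 1)) = 2"
    using k by (simp add: of_nat_diff algebra_simps)
  moreover have "vertex_at 1 (4 * int k) (6 * int k - 1) = vertex_at (-1) 0 2"
    unfolding vertex_at_def using torus_shift_eq_iff[of 4 n v] n_pos n
    by (simp add: mod_eq_dvd_iff)
  ultimately show False using no_strong_at_column_2[of "-1" 0] by simp
qed

end

section \<open>The lower bound\<close>

lemma exact_cover_impossible_mod_6_3:
  assumes n: "n mod 6 = 3" and dom: "\<forall>u\<in>torus_V 4 n. \<exists>w. covers n f w u"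
    and power_le_2: "\<forall>w\<in>torus_V 4 n. f w \<le> 2" and no_weak: "card {w \<in> torus_V 4 n. f w = 1} = 0"
  shows "cover_excess n f \<noteq> 0"
proof
  assume excess: "cover_excess n f = 0"
  have "(0, 0) \<in> torus_V 4 n" using n by (auto simp: mem_torus_V)
  then obtain w0 where "covers n f w0 (0, 0)" using dom by blast
  have power2: "\<forall>w\<in>torus_V 4 n. 0 < f w \<longrightarrow> f w = 2"
    using power_le_2 no_weak by fastforce
  then have w0: "w0 \<in> torus_V 4 n" "f w0 = 2"
    using \<open>covers n f w0 (0, 0)\<close> by (auto simp: covers_def)
  have unique: "w1 = w2" if "u \<in> torus_V 4 n" "covers n f w1 u" "covers n f w2 u" for u w1 w2
  proof (rule ccontr)
    assume "w1 \<noteq> w2"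
    then have "multiply_covered n f u" using that unfolding multiply_covered_def by blast
    then show False
      using cover_count_ge_2 cover_excess_ge_cover_count[OF that(1), of f] excess by fastforce
  qed
  have "n = 6 * (n div 6) + 3" using n div_mult_mod_eq[of n 6] by simp
  from no_perfect_cover[OF this dom power2 unique w0] show False .
qed

lemma near_exact_cover_impossible_mod_6_1:
  assumes n: "n mod 6 = 1" "n \<ge> 4" and dom: "\<forall>u\<in>torus_V 4 n. \<exists>w. covers n f w u"
    and power_le_2: "\<forall>w\<in>torus_V 4 n. f w \<le> 2" and one_weak: "card {w \<in> torus_V 4 n. f w = 1} = 1"
  shows "cover_excess n f \<ge> 2"
proof (rule ccontr)
  assume excess: "\<not> cover_excess n f \<ge> 2"
  obtain v where v: "{w \<in> torus_V 4 n. f w = 1} = {v}" using one_weak card_1_singletonE by blast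
  have "near_perfect_cover n f v"
  proof
    show "n \<ge> 7" using n by presburger
    show "v \<in> torus_V 4 n" "f v = 1" "\<forall>w\<in>torus_V 4 n. f w = 1 \<longrightarrow> w = v" using v by auto
    show "u1 = u2" if "u1 \<in> torus_V 4 n" "u2 \<in> torus_V 4 n"
      "multiply_covered n f u1" "multiply_covered n f u2" for u1 u2
    proof (rule ccontr)
      assume "u1 \<noteq> u2"
      then have "(\<Sum>u\<in>{u1, u2}. cover_count n f u - 1) \<le> cover_excess n f"
        using that by (intro sum_cover_count_le_excess) auto
      then show False using excess \<open>u1 \<noteq> u2\<close> cover_count_ge_2[OF that(3)] cover_count_ge_2[OF that(4)]
        by simp
    qed
    show "w2 = w3" if "u \<in> torus_V 4 n" "covers n f w1 u" "covers n f w2 u" "covers n f w3 u"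
      "w1 \<noteq> w2" "w1 \<noteq> w3" for u w1 w2 w3
    proof (rule ccontr)
      assume "w2 \<noteq> w3"
      then have "card {w1, w2, w3} \<le> cover_count n f u"
        using that by (intro card_le_cover_count) auto
      then show False
        using excess \<open>w2 \<noteq> w3\<close> that(5,6) cover_excess_ge_cover_count[OF that(1), of f] by simp
    qed
  qed (use dom power_le_2 in blast)+
  then show False using near_perfect_cover.mod_6_ne_1 n by blast
qed

definition gamma_formula :: "nat \<Rightarrow> nat" where
  "gamma_formula n = 4 * (n div 6) +
     (if n mod 6 = 0 then 0
      else if n mod 6 = 1 \<or> n mod 6 = 2 then 2
      else if n mod 6 = 3 \<or> n mod 6 = 4 then 3
      else 4)"

lemma cost_below_gamma_formula:
  fixes a b e :: nat
  assumes cost: "a + 2 * b < gamma_formula n" and count: "4 * n + e \<le> 5 * a + 12 * b"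
  shows "n mod 6 = 3 \<and> a = 0 \<and> e = 0 \<or> n mod 6 = 1 \<and> a = 1 \<and> e \<le> 1"
proof -
  obtain k s where ks: "n div 6 = k" "n mod 6 = s" by blast
  then have "n = 6 * k + s" "s < 6" by auto
  then have count': "24 * k + 4 * s + e \<le> 5 * a + 12 * b" using count by simp
  have cost': "a + 2 * b < 4 * k +
      (if s = 0 then 0 else if s = 1 \<or> s = 2 then 2 else if s = 3 \<or> s = 4 then 3 else 4)"
    using cost unfolding gamma_formula_def ks .
  consider (one) "s = 1" | (three) "s = 3" | (other) "s = 0 \<or> s = 2 \<or> s = 4 \<or> s = 5" using \<open>s < 6\<close> by arith
  then show ?thesis
  proof cases
    case one
    then have "a + 2 * b \<le> 4 * k + 1" "24 * k + 4 + e \<le> 5 * a + 12 * b"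
      using cost' count' by simp_all
    moreover from this have "b \<le> 2 * k" if "a = 0" using that by linarith
    moreover from calculation have "b + 1 \<le> 2 * k" if "a = 2" using that by linarith
    ultimately show ?thesis using one ks by linarith
  next
    case three
    then have "a + 2 * b \<le> 4 * k + 2" "24 * k + 12 + e \<le> 5 * a + 12 * b"
      using cost' count' by simp_all
    then show ?thesis using three ks by linarith
  next
    case other
    with cost' count' show ?thesis by auto
  qed
qed

theorem gamma_formula_le_cost:
  assumes n: "n \<ge> 4" and f: "dominating_bcast2 (torus_V 4 n) (torus_E 4 n) f"
  shows "gamma_formula n \<le> bcast_cost (torus_V 4 n) f"
proof (rule ccontr)
  assume lt: "\<not> gamma_formula n \<le> bcast_cost (torus_V 4 n) f"
  have dom: "\<forall>u\<in>torus_V 4 n. \<exists>w. covers n f w u" and power_le_2: "\<forall>w\<in>torus_V 4 n. f w \<le> 2"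
    using f dominating_bcast2_torus_iff[of n f] n by (auto simp: broadcast2_def)
  let ?a = "card {w \<in> torus_V 4 n. f w = 1}" and ?b = "card {w \<in> torus_V 4 n. f w = 2}"
  have "4 * n + cover_excess n f \<le> 5 * ?a + 12 * ?b"
    using sum_cover_count_eq_excess[OF dom] sum_cover_count_le[OF _ power_le_2] n by simp
  moreover have "?a + 2 * ?b < gamma_formula n" using lt bcast_cost_eq[OF power_le_2] by simp
  ultimately show False
    using cost_below_gamma_formula exact_cover_impossible_mod_6_3[OF _ dom power_le_2]
      near_exact_cover_impossible_mod_6_1[OF _ n dom power_le_2] by fastforce
qed

section \<open>The construction\<close>

text \<open>For \<open>n = 6k + s\<close>, the power-2 vertices \<open>(0, 6q)\<close> and \<open>(2, 6q + 3)\<close>, \<open>q < k\<close>, are heard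
  exactly once by every vertex of the first \<open>6k\<close> columns; the sites involving \<open>s\<close> patch the rest.\<close>

definition strong_sites :: "nat \<Rightarrow> nat \<Rightarrow> (nat \<times> nat) set" where
  "strong_sites k s =
     (\<lambda>q. (0, 6 * q)) ` {..<k} \<union> (\<lambda>q. (2, 6 * q + 3)) ` {..<(if s = 2 then k - 1 else k)} \<union>
     (if s = 0 then {} else if s = 2 then {(2, 6 * k - 1)}
      else if s = 5 then {(0, 6 * k), (2, 6 * k + 2)} else {(0, 6 * k)})"

definition weak_sites :: "nat \<Rightarrow> nat \<Rightarrow> (nat \<times> nat) set" where
  "weak_sites k s =
     (if s = 2 then {(2, 6 * k - 4), (0, 6 * k - 3)}
      else if s = 3 then {(2, 6 * k + 1)} else if s = 4 then {(2, 6 * k + 2)} else {})"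

definition tiling_bcast :: "nat \<Rightarrow> nat \<times> nat \<Rightarrow> nat" where
  "tiling_bcast n w =
     (if w \<notin> torus_V 4 n then 0
      else if w \<in> strong_sites (n div 6) (n mod 6) then 2
      else if w \<in> weak_sites (n div 6) (n mod 6) then 1 else 0)"

lemma tiling_bcast_le:
  "tiling_bcast n w \<le> 2 * of_bool (w \<in> strong_sites (n div 6) (n mod 6)) + of_bool (w \<in> weak_sites (n div 6) (n mod 6))"
  by (simp add: tiling_bcast_def)

lemma card_strong_sites:
  "card (strong_sites k s) \<le> k + (if s = 2 then k - 1 else k) + (if s = 0 then 0 else if s = 5 then 2 else 1)"
proof -
  let ?A = "(\<lambda>q. (0::nat, 6 * q)) ` {..<k}"
  let ?B = "(\<lambda>q. (2::nat, 6 * q + 3)) ` {..<(if s = 2 then k - 1 else k)}"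
  let ?X = "if s = 0 then {} else if s = 2 then {(2::nat, 6 * k - 1)}
            else if s = 5 then {(0, 6 * k), (2, 6 * k + 2)} else {(0, 6 * k)}"
  have "card (strong_sites k s) \<le> card (?A \<union> ?B) + card ?X"
    unfolding strong_sites_def by (rule card_Un_le)
  moreover have "card (?A \<union> ?B) \<le> card ?A + card ?B" by (rule card_Un_le)
  moreover have "card ?A \<le> k" "card ?B \<le> (if s = 2 then k - 1 else k)"
    by (metis card_image_le card_lessThan finite_lessThan)+
  moreover have "card ?X \<le> (if s = 0 then 0 else if s = 5 then 2 else 1)"
    by (simp add: card_insert_le)
  ultimately show ?thesis by linarith
qed

lemma card_weak_sites: "card (weak_sites k s) \<le> (if s = 2 then 2 else if s = 3 \<or> s = 4 then 1 else 0)"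
  by (simp add: weak_sites_def card_insert_le)

lemma bcast_cost_tiling_le:
  assumes "n \<ge> 4"
  shows "bcast_cost (torus_V 4 n) (tiling_bcast n) \<le> gamma_formula n"
proof -
  let ?k = "n div 6" and ?s = "n mod 6"
  let ?S = "strong_sites ?k ?s" and ?W = "weak_sites ?k ?s"
  have "bcast_cost (torus_V 4 n) (tiling_bcast n)
          \<le> (\<Sum>w\<in>torus_V 4 n. 2 * of_bool (w \<in> ?S) + of_bool (w \<in> ?W))"
    unfolding bcast_cost_def by (rule sum_mono) (rule tiling_bcast_le)
  also have "\<dots> = 2 * card (torus_V 4 n \<inter> ?S) + card (torus_V 4 n \<inter> ?W)"
    by (simp add: sum.distrib sum_distrib_left Int_def)
  also have "\<dots> \<le> 2 * card ?S + card ?W"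
    by (intro add_mono mult_le_mono2 card_mono) (auto simp: strong_sites_def weak_sites_def)
  also have "\<dots> \<le> gamma_formula n"
  proof -
    have "?s = 2 \<Longrightarrow> ?k \<ge> 1" using assms by presburger
    then show ?thesis
      using card_strong_sites[of ?k ?s] card_weak_sites[of ?k ?s] mod_less_divisor[of 6 n]
      unfolding gamma_formula_def by (auto split: if_splits)
  qed
  finally show ?thesis .
qed

lemma tiling_bcast_values:
  assumes n: "n = 6 * k + s" "s < 6" "n \<ge> 4"
  shows tiling_bcast_block_0: "q < k \<Longrightarrow> tiling_bcast n (0, 6 * q) = 2"
    and tiling_bcast_block_3: "q < k \<Longrightarrow> (s = 2 \<longrightarrow> q + 1 < k) \<Longrightarrow> tiling_bcast n (2, 6 * q + 3) = 2"
    and "tiling_bcast n (0, 0) = 2"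
    and tiling_bcast_6k: "s \<noteq> 0 \<Longrightarrow> s \<noteq> 2 \<Longrightarrow> tiling_bcast n (0, 6 * k) = 2"
    and "s = 5 \<Longrightarrow> tiling_bcast n (2, 6 * k + 2) = 2"
    and "s = 4 \<Longrightarrow> tiling_bcast n (2, 6 * k + 2) = 1"
    and "s = 3 \<Longrightarrow> tiling_bcast n (2, 6 * k + 1) = 1"
    and "s = 2 \<Longrightarrow> tiling_bcast n (2, 6 * k - 1) = 2"
      "s = 2 \<Longrightarrow> tiling_bcast n (2, 6 * k - 4) = 1"
      "s = 2 \<Longrightarrow> tiling_bcast n (0, 6 * k - 3) = 1"
proof -
  have nd: "n div 6 = k" "n mod 6 = s" using n by auto
  note defs = strong_sites_def weak_sites_def mem_torus_V
  show "q < k \<Longrightarrow> tiling_bcast n (0, 6 * q) = 2" unfolding tiling_bcast_def nd using n by (auto simp: defs)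
  show "q < k \<Longrightarrow> (s = 2 \<longrightarrow> q + 1 < k) \<Longrightarrow> tiling_bcast n (2, 6 * q + 3) = 2" unfolding tiling_bcast_def nd using n by (auto simp: defs)
  show "tiling_bcast n (0, 0) = 2" unfolding tiling_bcast_def nd using n by (cases "k = 0") (auto simp: defs)
  show "s \<noteq> 0 \<Longrightarrow> s \<noteq> 2 \<Longrightarrow> tiling_bcast n (0, 6 * k) = 2" unfolding tiling_bcast_def nd using n by (auto simp: defs)
  show "s = 5 \<Longrightarrow> tiling_bcast n (2, 6 * k + 2) = 2" unfolding tiling_bcast_def nd using n by (auto simp: defs)
  show "s = 4 \<Longrightarrow> tiling_bcast n (2, 6 * k + 2) = 1" unfolding tiling_bcast_def nd using n by (auto simp: defs) presburger
  show "s = 3 \<Longrightarrow> tiling_bcast n (2, 6 * k + 1) = 1" unfolding tiling_bcast_def nd using n by (auto simp: defs) presburger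
  show "s = 2 \<Longrightarrow> tiling_bcast n (2, 6 * k - 1) = 2" unfolding tiling_bcast_def nd using n by (auto simp: defs)
  show "s = 2 \<Longrightarrow> tiling_bcast n (2, 6 * k - 4) = 1" unfolding tiling_bcast_def nd using n by (auto simp: defs)
  show "s = 2 \<Longrightarrow> tiling_bcast n (0, 6 * k - 3) = 1" unfolding tiling_bcast_def nd using n by (auto simp: defs)
qed

lemma covers_site:
  assumes "f w = R" "0 < R" "w \<in> torus_V 4 n"
    and "int c - int (snd w) = d \<or> int c - int (snd w) = d + int n"
    and "circ_norm 4 (int r - int (fst w)) + \<bar>d\<bar> \<le> int R"
  shows "\<exists>w. covers n f w (r, c)"
proof -
  have n: "n > 0" using assms(3) by (auto simp: mem_torus_V)
  have "circ_norm (int n) (int c - int (snd w)) = circ_norm (int n) d"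
    using assms(4) by (auto intro: circ_norm_cong)
  then have "torus_dist 4 n w (r, c) \<le> int R"
    using circ_norm_le_abs[of "int n" d] n assms(5) by (simp add: torus_dist_def)
  then show ?thesis using assms(1-3) unfolding covers_def by blast
qed

lemma block_covered:
  assumes f: "f (0, a) = 2" "f (2, a + 3) = 2" "f (0, b) = 2"
    and "a + 5 < n" "b < n" "b = a + 6 \<or> b + n = a + 6" "j < 6" "r < 4"
  shows "\<exists>w. covers n f w (r, a + j)"
proof -
  have V: "(0, a) \<in> torus_V 4 n" "(2, a + 3) \<in> torus_V 4 n" "(0, b) \<in> torus_V 4 n"
    using assms by (auto simp: mem_torus_V)
  note c0 = covers_site[where f = f and w = "(0, a)", OF f(1) _ V(1)]
    and c3 = covers_site[where f = f and w = "(2, a + 3)", OF f(2) _ V(2)]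
    and cb = covers_site[where f = f and w = "(0, b)", OF f(3) _ V(3)]
  have "r = 0 \<or> r = 1 \<or> r = 2 \<or> r = 3" "j = 0 \<or> j = 1 \<or> j = 2 \<or> j = 3 \<or> j = 4 \<or> j = 5"
    using assms by auto
  then show ?thesis
    using c0[of _ 0] c0[of _ 1] c0[of _ 2] c3[of _ "-2"] c3[of _ "-1"] c3[of _ 0] c3[of _ 1] c3[of _ 2]
      cb[of _ "-2"] cb[of _ "-1"] assms(6)
    by (elim disjE) simp_all
qed

lemma tail_covered_mod_6_1:
  assumes n: "n = 6 * k + 1" "n \<ge> 4" and c: "6 * k \<le> c" "c < n" and r: "r < 4"
  shows "\<exists>w. covers n (tiling_bcast n) w (r, c)"
proof -
  have "tiling_bcast n (0, 6 * k) = 2" using tiling_bcast_6k[OF n(1) _ n(2)] by simp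
  from covers_site[where f = "tiling_bcast n" and w = "(0, 6 * k)" and d = 0, OF this]
  show ?thesis using n c r circ_norm_4_le_2 by (simp add: mem_torus_V)
qed

lemma tail_covered_mod_6_3:
  assumes n: "n = 6 * k + 3" "n \<ge> 4" and c: "6 * k \<le> c" "c < n" and r: "r < 4"
  shows "\<exists>w. covers n (tiling_bcast n) w (r, c)"
proof -
  note cov = covers_site[where f = "tiling_bcast n"]
  have H: "tiling_bcast n (0, 6 * k) = 2" "tiling_bcast n (2, 6 * k + 1) = 1" "tiling_bcast n (0, 0) = 2"
    using tiling_bcast_values[OF n(1) _ n(2)] by simp_all
  have V: "(0, 6 * k) \<in> torus_V 4 n" "(2, 6 * k + 1) \<in> torus_V 4 n" "(0, 0) \<in> torus_V 4 n"
    using n by (simp_all add: mem_torus_V)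
  obtain i where "c = 6 * k + i" "i < 3" using c n le_Suc_ex by fastforce
  moreover from this have "i = 0 \<or> i = 1 \<or> i = 2" "r = 0 \<or> r = 1 \<or> r = 2 \<or> r = 3" using r by auto
  ultimately show ?thesis
    using cov[OF H(1) _ V(1), of c 0] cov[OF H(1) _ V(1), of c 1] cov[OF H(1) _ V(1), of c 2]
      cov[OF H(2) _ V(2), of c 0] cov[OF H(2) _ V(2), of c 1] cov[OF H(3) _ V(3), of c "-1"] n
    by (elim disjE) simp_all
qed

lemma tail_covered_mod_6_4:
  assumes n: "n = 6 * k + 4" and c: "6 * k \<le> c" "c < n" and r: "r < 4"
  shows "\<exists>w. covers n (tiling_bcast n) w (r, c)"
proof -
  note cov = covers_site[where f = "tiling_bcast n"]
  have H: "tiling_bcast n (0, 6 * k) = 2" "tiling_bcast n (2, 6 * k + 2) = 1" "tiling_bcast n (0, 0) = 2"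
    using tiling_bcast_values[OF n(1)] n by simp_all
  have V: "(0, 6 * k) \<in> torus_V 4 n" "(2, 6 * k + 2) \<in> torus_V 4 n" "(0, 0) \<in> torus_V 4 n"
    using n by (simp_all add: mem_torus_V)
  obtain i where "c = 6 * k + i" "i < 4" using c n le_Suc_ex by fastforce
  moreover from this have "i = 0 \<or> i = 1 \<or> i = 2 \<or> i = 3" "r = 0 \<or> r = 1 \<or> r = 2 \<or> r = 3" using r by auto
  ultimately show ?thesis
    using cov[OF H(1) _ V(1), of c 0] cov[OF H(1) _ V(1), of c 1] cov[OF H(1) _ V(1), of c 2]
      cov[OF H(2) _ V(2), of c "-1"] cov[OF H(2) _ V(2), of c 0] cov[OF H(2) _ V(2), of c 1]
      cov[OF H(3) _ V(3), of c "-1"] n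
    by (elim disjE) simp_all
qed

lemma tail_covered_mod_6_5:
  assumes n: "n = 6 * k + 5" and c: "6 * k \<le> c" "c < n" and r: "r < 4"
  shows "\<exists>w. covers n (tiling_bcast n) w (r, c)"
proof -
  note cov = covers_site[where f = "tiling_bcast n"]
  have H: "tiling_bcast n (0, 6 * k) = 2" "tiling_bcast n (2, 6 * k + 2) = 2" "tiling_bcast n (0, 0) = 2"
    using tiling_bcast_values[OF n(1)] n by simp_all
  have V: "(0, 6 * k) \<in> torus_V 4 n" "(2, 6 * k + 2) \<in> torus_V 4 n" "(0, 0) \<in> torus_V 4 n"
    using n by (simp_all add: mem_torus_V)
  obtain i where "c = 6 * k + i" "i < 5" using c n le_Suc_ex by fastforce
  moreover from this have "i = 0 \<or> i = 1 \<or> i = 2 \<or> i = 3 \<or> i = 4" "r = 0 \<or> r = 1 \<or> r = 2 \<or> r = 3"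
    using r by auto
  ultimately show ?thesis
    using cov[OF H(1) _ V(1), of c 0] cov[OF H(1) _ V(1), of c 1] cov[OF H(2) _ V(2), of c "-1"]
      cov[OF H(2) _ V(2), of c 0] cov[OF H(2) _ V(2), of c 1] cov[OF H(2) _ V(2), of c 2]
      cov[OF H(3) _ V(3), of c "-2"] cov[OF H(3) _ V(3), of c "-1"] n
    by (elim disjE) simp_all
qed

lemma tail_covered_mod_6_2:
  assumes n: "n = 6 * k + 2" "n \<ge> 4" and c: "6 * k - 6 \<le> c" "c < n" and r: "r < 4"
  shows "\<exists>w. covers n (tiling_bcast n) w (r, c)"
proof -
  note cov = covers_site[where f = "tiling_bcast n"]
  obtain j where k: "k = j + 1" using n by (cases k) auto
  have H: "tiling_bcast n (0, 6 * j) = 2" "tiling_bcast n (2, 6 * j + 2) = 1" "tiling_bcast n (0, 6 * j + 3) = 1"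
    "tiling_bcast n (2, 6 * j + 5) = 2" "tiling_bcast n (0, 0) = 2"
    using tiling_bcast_values[OF n(1) _ n(2)] k by (simp_all add: algebra_simps)
  have V: "(0, 6 * j) \<in> torus_V 4 n" "(2, 6 * j + 2) \<in> torus_V 4 n" "(0, 6 * j + 3) \<in> torus_V 4 n"
    "(2, 6 * j + 5) \<in> torus_V 4 n" "(0, 0) \<in> torus_V 4 n"
    using n k by (simp_all add: mem_torus_V)
  obtain i where "c = 6 * j + i" "i < 8" using c n k le_Suc_ex by fastforce
  moreover from this have "i = 0 \<or> i = 1 \<or> i = 2 \<or> i = 3 \<or> i = 4 \<or> i = 5 \<or> i = 6 \<or> i = 7"
    "r = 0 \<or> r = 1 \<or> r = 2 \<or> r = 3" using r by auto
  ultimately show ?thesis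
    using cov[OF H(1) _ V(1), of c 0] cov[OF H(1) _ V(1), of c 1] cov[OF H(1) _ V(1), of c 2]
      cov[OF H(2) _ V(2), of c "-1"] cov[OF H(2) _ V(2), of c 0]
      cov[OF H(3) _ V(3), of c 0] cov[OF H(3) _ V(3), of c 1]
      cov[OF H(4) _ V(4), of c "-2"] cov[OF H(4) _ V(4), of c "-1"] cov[OF H(4) _ V(4), of c 0]
      cov[OF H(4) _ V(4), of c 1] cov[OF H(4) _ V(4), of c 2]
      cov[OF H(5) _ V(5), of c "-2"] cov[OF H(5) _ V(5), of c "-1"] n k
    by (elim disjE) simp_all
qed

lemma tiling_bcast_covers:
  assumes n: "n \<ge> 4" and u: "u \<in> torus_V 4 n"
  shows "\<exists>w. covers n (tiling_bcast n) w u"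
proof -
  define k s where "k = n div 6" and "s = n mod 6"
  have ks: "n = 6 * k + s" "s < 6" by (simp_all add: k_def s_def)
  obtain r c where u: "u = (r, c)" "r < 4" "c < n" using u by (cases u) (auto simp: mem_torus_V)
  show ?thesis
  proof (cases "c < 6 * k \<and> (s = 2 \<longrightarrow> c div 6 + 1 < k)")
    case True
    define q where "q = c div 6"
    have q: "q < k" "c = 6 * q + c mod 6" using True by (auto simp: q_def)
    define b where "b = (if q + 1 < k then 6 * q + 6 else if s = 0 then 0 else 6 * k)"
    have "tiling_bcast n (0, 6 * q + 6) = 2" if "q + 1 < k"
      using tiling_bcast_block_0[OF ks n that] by (simp add: algebra_simps)
    then have "tiling_bcast n (0, b) = 2"
      using True q tiling_bcast_values[OF ks n] by (auto simp: b_def q_def)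
    moreover have "b < n" "b = 6 * q + 6 \<or> b + n = 6 * q + 6"
      using True q ks by (auto simp: b_def q_def)
    moreover have "6 * q + 5 < n" "s = 2 \<longrightarrow> q + 1 < k" using True q ks by (auto simp: q_def)
    ultimately have "\<exists>w. covers n (tiling_bcast n) w (r, 6 * q + c mod 6)"
      using block_covered[OF tiling_bcast_block_0[OF ks n q(1)] tiling_bcast_block_3[OF ks n q(1)], of b n "c mod 6" r]
        u by simp
    then show ?thesis using u q by simp
  next
    case False
    have "s = 0 \<or> s = 1 \<or> s = 2 \<or> s = 3 \<or> s = 4 \<or> s = 5" using ks by arith
    then show ?thesis
      using False u ks n tail_covered_mod_6_1[of n k c r] tail_covered_mod_6_2[of n k c r]
        tail_covered_mod_6_3[of n k c r] tail_covered_mod_6_4[of n k c r] tail_covered_mod_6_5[of n k c r]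
      by (elim disjE) auto
  qed
qed

lemma dominating_tiling_bcast:
  assumes "n \<ge> 4"
  shows "dominating_bcast2 (torus_V 4 n) (torus_E 4 n) (tiling_bcast n)"
proof -
  have "broadcast2 (torus_V 4 n) (tiling_bcast n)"
    unfolding broadcast2_def tiling_bcast_def by simp
  then show ?thesis
    using assms tiling_bcast_covers dominating_bcast2_torus_iff[of n] by simp
qed

theorem theorem4p3:
  fixes n :: nat
  assumes "n \<ge> 4"
  shows "gamma_b2 (torus_V 4 n) (torus_E 4 n) =
           4 * (n div 6) +
           (if n mod 6 = 0 then 0
            else if n mod 6 = 1 \<or> n mod 6 = 2 then 2
            else if n mod 6 = 3 \<or> n mod 6 = 4 then 3
            else 4)"
proof -
  have "gamma_b2 (torus_V 4 n) (torus_E 4 n) = gamma_formula n"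
    unfolding gamma_b2_def
  proof (rule Least_equality)
    show "\<exists>f. dominating_bcast2 (torus_V 4 n) (torus_E 4 n) f \<and> bcast_cost (torus_V 4 n) f = gamma_formula n"
      using dominating_tiling_bcast[OF assms] bcast_cost_tiling_le[OF assms]
        gamma_formula_le_cost[OF assms] le_antisym by blast
  qed (use gamma_formula_le_cost[OF assms] in blast)
  then show ?thesis by (simp add: gamma_formula_def)
qed

end
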